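(* Let $\mathfrak a=\{(a_1,\dots,a_{n+1})\in\mathbb R^{n+1}:a_1+\dots+a_{n+1}=0\}$ be the maximal abelian subspace of $\mathfrak p$ for $\mathrm{SL}_{n+1}\mathbb R$ (diagonal trace-zero matrices), with positive roots $\Lambda^+=\{a_j^*-a_l^*: j<l\}$. Let $\{v_1,\dots,v_n\}$ be any basis of $\mathfrak a$, and let $A$ be the $n\times|\Lambda^+|$ matrix with rows indexed by $i$ and columns by $\alpha\in\Lambda^+$, whose $(i,\alpha)$ entry is $1$ if $\alpha(v_i)\ne0$ and $0$ otherwise. Then each row of $A$ has at most one entry equal to $1$ in a column whose other entries are all $0$; that is, for each $i$ there is at most one $\alpha\in\Lambda^+$ with $\alpha(v_i)\ne0$ and $\alpha(v_k)=0$ for all $k\ne i$. *)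

theory Defs
  imports Complex_Main
begin

text \<open>Vectors of R^(n+1) are modelled as functions nat => real, using the
coordinates 0..n (coordinate j here is coordinate j+1 of the paper);
values outside 0..n are irrelevant.\<close>

definition frak_a :: "nat \<Rightarrow> (nat \<Rightarrow> real) set" where
  "frak_a n = {x. (\<Sum>j\<le>n. x j) = 0}"

text \<open>Positive roots a_j^* - a_l^* with j < l, encoded as the pair (j,l).\<close>
definition pos_roots :: "nat \<Rightarrow> (nat \<times> nat) set" where
  "pos_roots n = {(j, l). j < l \<and> l \<le> n}"

definition root_eval :: "nat \<times> nat \<Rightarrow> (nat \<Rightarrow> real) \<Rightarrow> real" where
  "root_eval \<alpha> x = x (fst \<alpha>) - x (snd \<alpha>)"

definition is_basis_of_a :: "nat \<Rightarrow> (nat \<Rightarrow> nat \<Rightarrow> real) \<Rightarrow> bool" where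
  "is_basis_of_a n v \<longleftrightarrow>
     (\<forall>i<n. v i \<in> frak_a n) \<and>
     (\<forall>c. (\<forall>j\<le>n. (\<Sum>i<n. c i * v i j) = 0) \<longrightarrow> (\<forall>i<n. c i = 0)) \<and>
     (\<forall>x\<in>frak_a n. \<exists>c. \<forall>j\<le>n. x j = (\<Sum>i<n. c i * v i j))"

end

theory Submission
  imports Defs
begin

text \<open>Expand an arbitrary x of \<open>frak_a n\<close> in the basis (only spanning is needed). If the positive
roots \<alpha> and \<beta> both vanish on every basis vector except v i, then \<alpha>(x) and \<beta>(x) are the same
multiple of \<alpha>(v i) and \<beta>(v i), so \<alpha> and \<beta> are proportional on the whole subspace.
Evaluating at the coroots e_j - e_l of \<alpha> and \<beta> shows that distinct positive roots of
type A are never proportional.\<close>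

definition coroot :: "nat \<times> nat \<Rightarrow> nat \<Rightarrow> real" where
  "coroot \<alpha> = (\<lambda>m. (if m = fst \<alpha> then 1 else 0) - (if m = snd \<alpha> then 1 else 0))"

lemma coroot_in_frak_a:
  assumes "\<alpha> \<in> pos_roots n"
  shows "coroot \<alpha> \<in> frak_a n"
  using assms by (auto simp: coroot_def frak_a_def pos_roots_def sum_subtractf)

lemma pos_roots_eq_if_proportional:
  fixes a b :: real
  assumes "\<alpha> \<in> pos_roots n" "\<beta> \<in> pos_roots n" "a \<noteq> 0" "b \<noteq> 0"
    and proportional: "\<forall>x\<in>frak_a n. b * root_eval \<alpha> x = a * root_eval \<beta> x"
  shows "\<alpha> = \<beta>"
proof -
  obtain j l p q where \<alpha>\<beta>: "\<alpha> = (j, l)" "\<beta> = (p, q)" "j < l" "p < q"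
    using assms(1,2) by (auto simp: pos_roots_def)
  have "b * root_eval \<alpha> (coroot \<alpha>) = a * root_eval \<beta> (coroot \<alpha>)"
       "b * root_eval \<alpha> (coroot \<beta>) = a * root_eval \<beta> (coroot \<beta>)"
    using proportional coroot_in_frak_a assms(1,2) by blast+
  then show ?thesis
    using \<alpha>\<beta> \<open>a \<noteq> 0\<close> \<open>b \<noteq> 0\<close> by (auto simp: root_eval_def coroot_def split: if_splits)
qed

lemma root_eval_linear_combination:
  assumes "\<forall>j\<le>n. x j = (\<Sum>k<m. c k * w k j)" "\<alpha> \<in> pos_roots n"
  shows "root_eval \<alpha> x = (\<Sum>k<m. c k * root_eval \<alpha> (w k))"
  using assms by (auto simp: root_eval_def pos_roots_def sum_subtractf right_diff_distrib)

lemma root_eval_common_scalar: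
  assumes "is_basis_of_a n v" "x \<in> frak_a n" "i < n"
  obtains c where
    "\<And>\<alpha>. \<alpha> \<in> pos_roots n \<Longrightarrow> \<forall>k<n. k \<noteq> i \<longrightarrow> root_eval \<alpha> (v k) = 0 \<Longrightarrow>
          root_eval \<alpha> x = c * root_eval \<alpha> (v i)"
proof -
  obtain c where c: "\<forall>j\<le>n. x j = (\<Sum>k<n. c k * v k j)"
    using assms(1,2) unfolding is_basis_of_a_def by blast
  have "root_eval \<alpha> x = c i * root_eval \<alpha> (v i)"
    if "\<alpha> \<in> pos_roots n" "\<forall>k<n. k \<noteq> i \<longrightarrow> root_eval \<alpha> (v k) = 0" for \<alpha>
    using root_eval_linear_combination[OF c that(1)] that(2) \<open>i < n\<close>
    by (simp add: sum.remove[of "{..<n}" i])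
  then show thesis using that by blast
qed

theorem lemma11p3:
  fixes n :: nat and v :: "nat \<Rightarrow> nat \<Rightarrow> real"
  assumes "is_basis_of_a n v"
  shows "\<forall>i<n. \<forall>\<alpha>\<in>pos_roots n. \<forall>\<beta>\<in>pos_roots n.
           (root_eval \<alpha> (v i) \<noteq> 0 \<and> (\<forall>k<n. k \<noteq> i \<longrightarrow> root_eval \<alpha> (v k) = 0)) \<and>
           (root_eval \<beta> (v i) \<noteq> 0 \<and> (\<forall>k<n. k \<noteq> i \<longrightarrow> root_eval \<beta> (v k) = 0))
           \<longrightarrow> \<alpha> = \<beta>"
proof (intro allI impI ballI)
  fix i \<alpha> \<beta>
  assume i: "i < n" and \<alpha>: "\<alpha> \<in> pos_roots n" and \<beta>: "\<beta> \<in> pos_roots n"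
    and H: "(root_eval \<alpha> (v i) \<noteq> 0 \<and> (\<forall>k<n. k \<noteq> i \<longrightarrow> root_eval \<alpha> (v k) = 0)) \<and>
            (root_eval \<beta> (v i) \<noteq> 0 \<and> (\<forall>k<n. k \<noteq> i \<longrightarrow> root_eval \<beta> (v k) = 0))"
  have "root_eval \<beta> (v i) * root_eval \<alpha> x = root_eval \<alpha> (v i) * root_eval \<beta> x"
    if x: "x \<in> frak_a n" for x
  proof -
    obtain c where "\<And>\<gamma>. \<gamma> \<in> pos_roots n \<Longrightarrow> \<forall>k<n. k \<noteq> i \<longrightarrow> root_eval \<gamma> (v k) = 0 \<Longrightarrow>
                     root_eval \<gamma> x = c * root_eval \<gamma> (v i)"
      using root_eval_common_scalar[OF assms x i] by blast
    then show ?thesis using \<alpha> \<beta> H by simp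
  qed
  then show "\<alpha> = \<beta>"
    using pos_roots_eq_if_proportional[OF \<alpha> \<beta>] H by blast
qed

end
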